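(* Let $(X,\mathcal{O}(X))$ be a measurable space, $\mathcal{A}$ a unital $C^*$-algebra and $\mathcal{H}$ a Hilbert space. Let $\mathcal{I}:\mathcal{O}(X)\to CP(\mathcal{A},\mathcal{B}(\mathcal{H}))$ be an extreme point of the convex set $I_{\mathcal{H}}(X,\mathcal{A})$ with commutative range, i.e. the operators $\mathcal{I}(A)(a)$, $A\in\mathcal{O}(X)$, $a\in\mathcal{A}$, pairwise commute. Then the POVM marginal $\mu_\mathcal{I}$, $\mu_\mathcal{I}(A)=\mathcal{I}(A)(1_\mathcal{A})$, is a spectral (projection-valued) measure.
   Context: A CP instrument is a map $\mathcal{I}$ from $\mathcal{O}(X)$ to the completely positive maps $\mathcal{A}\to\mathcal{B}(\mathcal{H})$ such that for all $a\in\mathcal{A}$, $h,k\in\mathcal{H}$, $A\mapsto\langle h,\mathcal{I}(A)(a)k\rangle$ is a countably additive complex measure. It is UCP if $\mathcal{I}(X)(1_\mathcal{A})=I_\mathcal{H}$; $I_{\mathcal{H}}(X,\mathcal{A})$ is the convex set of UCP instruments. *)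

theory Defs
  imports "HOL-Analysis.Analysis"
begin

definition hnorm :: "('h \<Rightarrow> 'h \<Rightarrow> complex) \<Rightarrow> 'h \<Rightarrow> real" where
  "hnorm ip x = sqrt (Re (ip x x))"

definition hilbert_space ::
  "(complex \<Rightarrow> 'h::ab_group_add \<Rightarrow> 'h) \<Rightarrow> ('h \<Rightarrow> 'h \<Rightarrow> complex) \<Rightarrow> bool" where
  "hilbert_space sc ip \<longleftrightarrow>
     vector_space sc \<and>
     (\<forall>x y z. ip x (y + z) = ip x y + ip x z) \<and>
     (\<forall>c x y. ip x (sc c y) = c * ip x y) \<and>
     (\<forall>x y. ip y x = cnj (ip x y)) \<and>
     (\<forall>x. 0 \<le> Re (ip x x)) \<and>
     (\<forall>x. ip x x = 0 \<longrightarrow> x = 0) \<and>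
     (\<forall>f :: nat \<Rightarrow> 'h. (\<forall>e>0. \<exists>N. \<forall>m\<ge>N. \<forall>n\<ge>N. hnorm ip (f m - f n) < e) \<longrightarrow>
        (\<exists>l. (\<lambda>n. hnorm ip (f n - l)) \<longlonglongrightarrow> 0))"

definition bounded_op ::
  "(complex \<Rightarrow> 'h::ab_group_add \<Rightarrow> 'h) \<Rightarrow> ('h \<Rightarrow> 'h \<Rightarrow> complex) \<Rightarrow> ('h \<Rightarrow> 'h) \<Rightarrow> bool" where
  "bounded_op sc ip T \<longleftrightarrow> Vector_Spaces.linear sc sc T \<and> (\<exists>K. \<forall>x. hnorm ip (T x) \<le> K * hnorm ip x)"

definition projection ::
  "(complex \<Rightarrow> 'h::ab_group_add \<Rightarrow> 'h) \<Rightarrow> ('h \<Rightarrow> 'h \<Rightarrow> complex) \<Rightarrow> ('h \<Rightarrow> 'h) \<Rightarrow> bool" where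
  "projection sc ip P \<longleftrightarrow> bounded_op sc ip P \<and> P \<circ> P = P \<and> (\<forall>x y. ip (P x) y = ip x (P y))"

definition unital_cstar_algebra ::
  "(complex \<Rightarrow> 'a::ring_1 \<Rightarrow> 'a) \<Rightarrow> ('a \<Rightarrow> 'a) \<Rightarrow> ('a \<Rightarrow> real) \<Rightarrow> bool" where
  "unital_cstar_algebra sa st nA \<longleftrightarrow>
     vector_space sa \<and>
     (\<forall>c x y. sa c (x * y) = sa c x * y \<and> sa c (x * y) = x * sa c y) \<and>
     (\<forall>x y. st (x + y) = st x + st y) \<and>
     (\<forall>c x. st (sa c x) = sa (cnj c) (st x)) \<and>
     (\<forall>x y. st (x * y) = st y * st x) \<and>
     (\<forall>x. st (st x) = x) \<and>
     (\<forall>x. nA x = 0 \<longleftrightarrow> x = 0) \<and>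
     (\<forall>x y. nA (x + y) \<le> nA x + nA y) \<and>
     (\<forall>c x. nA (sa c x) = cmod c * nA x) \<and>
     (\<forall>x y. nA (x * y) \<le> nA x * nA y) \<and>
     (\<forall>x. nA (st x * x) = (nA x)\<^sup>2) \<and>
     (\<forall>f :: nat \<Rightarrow> 'a. (\<forall>e>0. \<exists>N. \<forall>m\<ge>N. \<forall>n\<ge>N. nA (f m - f n) < e) \<longrightarrow>
        (\<exists>l. (\<lambda>n. nA (f n - l)) \<longlonglongrightarrow> 0))"

text \<open>Completely positive maps A -> B(H): complex-linear, valued in bounded operators, and
  for every n the amplification to M_n(A) -> M_n(B(H)) = B(H^n) is positive. Positive elements
  of M_n(A) are those of the form Y* Y (Y in M_n(A)); an operator T in B(H^n) is positive
  iff <h, T h> >= 0 for all h in H^n.\<close>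

definition completely_positive ::
  "(complex \<Rightarrow> 'a::ring_1 \<Rightarrow> 'a) \<Rightarrow> ('a \<Rightarrow> 'a) \<Rightarrow>
   (complex \<Rightarrow> 'h::ab_group_add \<Rightarrow> 'h) \<Rightarrow> ('h \<Rightarrow> 'h \<Rightarrow> complex) \<Rightarrow>
   ('a \<Rightarrow> 'h \<Rightarrow> 'h) \<Rightarrow> bool" where
  "completely_positive sa st sc ip \<phi> \<longleftrightarrow>
     (\<forall>a. bounded_op sc ip (\<phi> a)) \<and>
     (\<forall>a b h. \<phi> (a + b) h = \<phi> a h + \<phi> b h) \<and>
     (\<forall>c a h. \<phi> (sa c a) h = sc c (\<phi> a h)) \<and>
     (\<forall>(n::nat) (Y :: nat \<Rightarrow> nat \<Rightarrow> 'a) (h :: nat \<Rightarrow> 'h).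
        let s = (\<Sum>i<n. \<Sum>j<n. ip (h i) (\<phi> (\<Sum>k<n. st (Y k i) * Y k j) (h j)))
        in Im s = 0 \<and> 0 \<le> Re s)"

definition cp_instrument ::
  "'x measure \<Rightarrow> (complex \<Rightarrow> 'a::ring_1 \<Rightarrow> 'a) \<Rightarrow> ('a \<Rightarrow> 'a) \<Rightarrow>
   (complex \<Rightarrow> 'h::ab_group_add \<Rightarrow> 'h) \<Rightarrow> ('h \<Rightarrow> 'h \<Rightarrow> complex) \<Rightarrow>
   ('x set \<Rightarrow> 'a \<Rightarrow> 'h \<Rightarrow> 'h) \<Rightarrow> bool" where
  "cp_instrument M sa st sc ip I \<longleftrightarrow>
     (\<forall>A\<in>sets M. completely_positive sa st sc ip (I A)) \<and>
     (\<forall>a h k. \<forall>F :: nat \<Rightarrow> 'x set. range F \<subseteq> sets M \<longrightarrow> disjoint_family F \<longrightarrow>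
        (\<lambda>n. ip h (I (F n) a k)) sums ip h (I (\<Union>n. F n) a k))"

definition ucp_instrument ::
  "'x measure \<Rightarrow> (complex \<Rightarrow> 'a::ring_1 \<Rightarrow> 'a) \<Rightarrow> ('a \<Rightarrow> 'a) \<Rightarrow>
   (complex \<Rightarrow> 'h::ab_group_add \<Rightarrow> 'h) \<Rightarrow> ('h \<Rightarrow> 'h \<Rightarrow> complex) \<Rightarrow>
   ('x set \<Rightarrow> 'a \<Rightarrow> 'h \<Rightarrow> 'h) \<Rightarrow> bool" where
  "ucp_instrument M sa st sc ip I \<longleftrightarrow>
     cp_instrument M sa st sc ip I \<and> (\<forall>h. I (space M) 1 h = h)"

text \<open>Extreme points of the convex set of UCP instruments (instruments are compared on the
  measurable sets only, where they are defined).\<close>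

definition extreme_ucp_instrument ::
  "'x measure \<Rightarrow> (complex \<Rightarrow> 'a::ring_1 \<Rightarrow> 'a) \<Rightarrow> ('a \<Rightarrow> 'a) \<Rightarrow>
   (complex \<Rightarrow> 'h::ab_group_add \<Rightarrow> 'h) \<Rightarrow> ('h \<Rightarrow> 'h \<Rightarrow> complex) \<Rightarrow>
   ('x set \<Rightarrow> 'a \<Rightarrow> 'h \<Rightarrow> 'h) \<Rightarrow> bool" where
  "extreme_ucp_instrument M sa st sc ip I \<longleftrightarrow>
     ucp_instrument M sa st sc ip I \<and>
     (\<forall>I1 I2 (t::real).
        ucp_instrument M sa st sc ip I1 \<longrightarrow> ucp_instrument M sa st sc ip I2 \<longrightarrow> 0 < t \<longrightarrow> t < 1 \<longrightarrow>
        (\<forall>A\<in>sets M. \<forall>a h. I A a h = sc (complex_of_real t) (I1 A a h) + sc (complex_of_real (1 - t)) (I2 A a h)) \<longrightarrow>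
        (\<forall>A\<in>sets M. \<forall>a h. I1 A a h = I A a h \<and> I2 A a h = I A a h))"

end

theory Submission
  imports Defs
begin

text \<open>Fix an event \<open>E\<close> and put \<open>P = \<mu>(E)\<close>, \<open>Q = \<mu>(X - E) = 1 - P\<close>;
  by assumption \<open>P\<close> and \<open>Q\<close> commute with every \<open>I(A)(a)\<close>. For small real \<open>e\<close> the maps
  \<open>J\<^sub>e(A)(a) = I(A \<inter> E)(a) (1 + e Q) + I(A - E)(a) (1 - e P)\<close>
  are again UCP instruments: they are unital because \<open>PQ = QP\<close>, and completely positive because
  composing a CP map on the right with a positive operator commuting with its range stays CP.
  Since \<open>I = (J\<^sub>e + J\<^sub>-\<^sub>e) / 2\<close>, extremality forces \<open>J\<^sub>e = I\<close>, and evaluating at \<open>E\<close> gives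
  \<open>PQ = 0\<close>, i.e. \<open>P\<^sup>2 = P\<close>; self-adjointness of \<open>P\<close> comes from its positivity.
  Positivity of \<open>1 + e S\<close> inside the amplified forms is shown without square roots, by a
  log-convexity argument.\<close>

lemma quadratic_nonneg_imp_discriminant:
  fixes a b c :: real
  assumes nonneg: "\<And>t. 0 \<le> a + 2*t*b + t^2*c" and c: "0 \<le> c"
  shows "b^2 \<le> a*c"
proof (cases "c = 0")
  case True
  have "b = 0"
  proof (rule ccontr)
    assume b: "b \<noteq> 0"
    have "0 \<le> a + 2*(-(a+1)/(2*b))*b + (-(a+1)/(2*b))^2*c" by (rule nonneg)
    also have "\<dots> = -1" using b True by (simp add: field_simps)
    finally show False by simp
  qed
  then show ?thesis using True by simp
next
  case False
  then have c_pos: "c > 0" using c by simp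
  have "0 \<le> a + 2*(-b/c)*b + (-b/c)^2*c" by (rule nonneg)
  also have "\<dots> = a - b^2/c" using c_pos by (simp add: field_simps power2_eq_square)
  finally have "0 \<le> (a - b^2/c) * c" using c_pos by simp
  also have "\<dots> = a*c - b^2" using c_pos by (simp add: field_simps)
  finally show ?thesis by simp
qed

text \<open>If \<open>q 1 > r * q 0\<close>, log-convexity makes \<open>q\<close> grow at least like \<open>(q 1 / q 0)^k\<close>,
  which eventually beats \<open>C * r^k\<close>.\<close>

lemma log_convex_ratio_le:
  fixes q :: "nat \<Rightarrow> real" and C r :: real
  assumes nonneg: "\<And>k. 0 \<le> q k"
    and log_convex: "\<And>k. (q (Suc k))^2 \<le> q k * q (Suc (Suc k))"
    and growth: "\<And>k. q k \<le> C * r^k" and r: "0 < r"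
  shows "q 1 \<le> r * q 0"
proof (rule ccontr)
  assume "\<not> q 1 \<le> r * q 0"
  then have big: "q 1 > r * q 0" by simp
  have q0: "q 0 > 0"
  proof (rule ccontr)
    assume "\<not> q 0 > 0"
    then have "q 0 = 0" using nonneg[of 0] by simp
    then have "q 1 = 0" using log_convex[of 0] by simp
    with big \<open>q 0 = 0\<close> show False by simp
  qed
  define \<rho> where "\<rho> = q 1 / q 0"
  have \<rho>_gt: "\<rho> > r" using big q0 by (simp add: \<rho>_def field_simps)
  then have \<rho>_pos: "\<rho> > 0" using r by simp
  have ratio: "q (Suc k) \<ge> \<rho> * q k \<and> q k > 0" for k
  proof (induction k)
    case 0
    then show ?case using q0 by (simp add: \<rho>_def)
  next
    case (Suc k)
    then have qk: "q k > 0" and step: "q (Suc k) \<ge> \<rho> * q k" by auto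
    have q_Suc: "q (Suc k) > 0" using step qk \<rho>_pos by (smt (verit) mult_pos_pos)
    have "q (Suc k) * (\<rho> * q k) \<le> q (Suc k) * q (Suc k)"
      using step q_Suc by (simp add: mult_left_mono)
    also have "\<dots> \<le> q k * q (Suc (Suc k))" using log_convex[of k] by (simp add: power2_eq_square)
    finally have "q k * (\<rho> * q (Suc k)) \<le> q k * q (Suc (Suc k))" by (simp add: ac_simps)
    then have "\<rho> * q (Suc k) \<le> q (Suc (Suc k))" using qk by simp
    then show ?case using q_Suc by simp
  qed
  have lower: "\<rho>^k * q 0 \<le> q k" for k
  proof (induction k)
    case (Suc k)
    have "\<rho>^(Suc k) * q 0 = \<rho> * (\<rho>^k * q 0)" by simp
    also have "\<dots> \<le> \<rho> * q k" using Suc \<rho>_pos by (simp add: mult_left_mono)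
    also have "\<dots> \<le> q (Suc k)" using ratio[of k] by simp
    finally show ?case .
  qed simp
  have "1 < \<rho> / r" using \<rho>_gt r by simp
  then obtain k where k: "C / q 0 < (\<rho>/r)^k" using real_arch_pow by blast
  have "\<rho>^k * q 0 \<le> C * r^k" using lower[of k] growth[of k] by simp
  then have "(\<rho>/r)^k * q 0 \<le> C" using r by (simp add: power_divide field_simps)
  then have "(\<rho>/r)^k \<le> C / q 0" using q0 by (simp add: field_simps)
  with k show False by simp
qed

section \<open>Hilbert spaces and bounded operators\<close>

locale hilbert_structure =
  fixes sc :: "complex \<Rightarrow> 'h::ab_group_add \<Rightarrow> 'h" and ip :: "'h \<Rightarrow> 'h \<Rightarrow> complex"
  assumes hilbert: "hilbert_space sc ip"
begin

sublocale vector_space sc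
  using hilbert unfolding hilbert_space_def by (elim conjE) blast

lemma ip_add_right: "ip x (y + z) = ip x y + ip x z"
  using hilbert unfolding hilbert_space_def by (elim conjE) blast

lemma ip_scale_right: "ip x (sc c y) = c * ip x y"
  using hilbert unfolding hilbert_space_def by (elim conjE) blast

lemma ip_cnj: "ip y x = cnj (ip x y)"
  using hilbert unfolding hilbert_space_def by (elim conjE) blast

lemma ip_self_nonneg: "0 \<le> Re (ip x x)"
  using hilbert unfolding hilbert_space_def by (elim conjE) blast

lemma ip_self_eq_0: "ip x x = 0 \<Longrightarrow> x = 0"
  using hilbert unfolding hilbert_space_def by (elim conjE) blast

lemma ip_add_left: "ip (x + y) z = ip x z + ip y z"
  by (metis ip_cnj ip_add_right complex_cnj_add)

lemma ip_scale_left: "ip (sc c x) y = cnj c * ip x y"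
  by (metis ip_cnj ip_scale_right complex_cnj_mult)

lemma ip_zero_right [simp]: "ip x 0 = 0"
  using ip_add_right[of x 0 0] by simp

lemma ip_diff_right: "ip x (y - z) = ip x y - ip x z"
  using ip_add_right[of x "y - z" z] by (simp add: algebra_simps)

lemma eq_if_ip_eq: "(\<And>g. ip g x = ip g y) \<Longrightarrow> x = y"
  using ip_self_eq_0[of "x - y"] by (simp add: ip_diff_right)

abbreviation hn :: "'h \<Rightarrow> real" where
  "hn \<equiv> hnorm ip"

lemma hn_nonneg: "0 \<le> hn x"
  using ip_self_nonneg[of x] by (simp add: hnorm_def)

lemma hn_square: "(hn x)^2 = Re (ip x x)"
  using ip_self_nonneg[of x] by (simp add: hnorm_def)

text \<open>Rotating \<open>u\<close> by the phase of \<open>ip u v\<close> makes the cross term real; the discriminant of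
  the real quadratic \<open>t \<mapsto> ip (u' + t v) (u' + t v)\<close> then gives the inequality.\<close>

lemma cauchy_schwarz: "cmod (ip u v) \<le> hn u * hn v"
proof (cases "ip u v = 0")
  case True
  then show ?thesis by (simp add: hn_nonneg)
next
  case False
  define r where "r = cmod (ip u v)"
  have r_pos: "r > 0" using False by (simp add: r_def)
  define l where "l = ip u v / complex_of_real r"
  define u' where "u' = sc l u"
  have square: "cnj (ip u v) * ip u v = complex_of_real (r^2)"
    using complex_norm_square[of "ip u v"] by (simp add: r_def mult.commute)
  have unimodular: "cnj l * l = 1"
    using square r_pos by (simp add: l_def power2_eq_square)
  have cross: "ip u' v = complex_of_real r"
  proof -
    have "ip u' v = (cnj (ip u v) * ip u v) / complex_of_real r"
      by (simp add: u'_def ip_scale_left l_def)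
    then show ?thesis using square r_pos by (simp add: power2_eq_square)
  qed
  then have cross': "ip v u' = complex_of_real r"
    by (metis ip_cnj complex_cnj_complex_of_real)
  have same: "ip u' u' = ip u u"
    by (simp add: u'_def ip_scale_left ip_scale_right mult.assoc[symmetric])
      (metis unimodular mult.commute)
  have "0 \<le> Re (ip u u) + 2*t*r + t^2 * Re (ip v v)" for t
  proof -
    let ?w = "u' + sc (complex_of_real t) v"
    have "ip ?w ?w = ip u' u' + complex_of_real t * (ip u' v + ip v u')
        + complex_of_real (t^2) * ip v v"
      by (simp add: ip_add_left ip_add_right ip_scale_left ip_scale_right algebra_simps
          power2_eq_square)
    then have "Re (ip ?w ?w) = Re (ip u u) + 2*t*r + t^2 * Re (ip v v)"
      by (simp add: cross cross' same)
    then show ?thesis using ip_self_nonneg[of ?w] by simp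
  qed
  then have "r^2 \<le> Re (ip u u) * Re (ip v v)"
    by (rule quadratic_nonneg_imp_discriminant) (rule ip_self_nonneg)
  also have "\<dots> = (hn u * hn v)^2" by (simp add: hn_square power_mult_distrib)
  finally show ?thesis unfolding r_def
    by (rule power2_le_imp_le) (simp add: hn_nonneg)
qed

lemma hn_triangle: "hn (x + y) \<le> hn x + hn y"
proof -
  have "(hn (x + y))^2 = Re (ip x x) + Re (ip x y) + Re (ip y x) + Re (ip y y)"
    by (simp add: hn_square ip_add_left ip_add_right)
  also have "\<dots> \<le> Re (ip x x) + cmod (ip x y) + cmod (ip y x) + Re (ip y y)"
    using complex_Re_le_cmod[of "ip x y"] complex_Re_le_cmod[of "ip y x"] by linarith
  also have "\<dots> \<le> (hn x)^2 + hn x * hn y + hn y * hn x + (hn y)^2"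
    using cauchy_schwarz[of x y] cauchy_schwarz[of y x] by (simp add: hn_square mult.commute)
  also have "\<dots> = (hn x + hn y)^2" by (simp add: power2_eq_square algebra_simps)
  finally show ?thesis
    by (rule power2_le_imp_le) (simp add: hn_nonneg add_nonneg_nonneg)
qed

lemma hn_scale: "hn (sc c x) = cmod c * hn x"
proof -
  have "ip (sc c x) (sc c x) = (cnj c * c) * ip x x"
    by (simp add: ip_scale_left ip_scale_right mult.assoc)
  also have "cnj c * c = complex_of_real ((cmod c)^2)"
    using complex_norm_square[of c] by (simp add: mult.commute)
  finally have "ip (sc c x) (sc c x) = complex_of_real ((cmod c)^2) * ip x x" .
  then show ?thesis by (simp add: hnorm_def real_sqrt_mult)
qed

definition linear_op :: "('h \<Rightarrow> 'h) \<Rightarrow> bool" where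
  "linear_op T \<longleftrightarrow> (\<forall>x y. T (x + y) = T x + T y) \<and> (\<forall>c x. T (sc c x) = sc c (T x))"

lemma linear_op_add: "linear_op T \<Longrightarrow> T (x + y) = T x + T y"
  by (simp add: linear_op_def)

lemma linear_op_scale: "linear_op T \<Longrightarrow> T (sc c x) = sc c (T x)"
  by (simp add: linear_op_def)

lemma linear_op_diff: "linear_op T \<Longrightarrow> T (x - y) = T x - T y"
  by (metis linear_op_add diff_add_cancel add_diff_cancel)

lemma bounded_op_iff: "bounded_op sc ip T \<longleftrightarrow> linear_op T \<and> (\<exists>K. \<forall>x. hn (T x) \<le> K * hn x)"
  by (simp add: bounded_op_def linear_op_def vector_space_axioms Vector_Spaces.linear_iff)

lemma bounded_op_linear_op: "bounded_op sc ip T \<Longrightarrow> linear_op T"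
  by (simp add: bounded_op_iff)

lemma bounded_op_bound:
  assumes "bounded_op sc ip T"
  shows "\<exists>K\<ge>0. \<forall>x. hn (T x) \<le> K * hn x"
proof -
  obtain K where K: "\<And>x. hn (T x) \<le> K * hn x" using assms by (auto simp: bounded_op_iff)
  have "hn (T x) \<le> \<bar>K\<bar> * hn x" for x
    using K[of x] hn_nonneg[of x] by (smt (verit) mult_right_mono)
  then show ?thesis by (intro exI[of _ "\<bar>K\<bar>"]) simp
qed

lemma bounded_opI: "linear_op T \<Longrightarrow> (\<And>x. hn (T x) \<le> K * hn x) \<Longrightarrow> bounded_op sc ip T"
  by (auto simp: bounded_op_iff)

lemma bounded_op_id: "bounded_op sc ip (\<lambda>x. x)"
  by (rule bounded_opI[of _ 1]) (auto simp: linear_op_def)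

lemma bounded_op_comp:
  assumes "bounded_op sc ip T" "bounded_op sc ip S"
  shows "bounded_op sc ip (\<lambda>x. T (S x))"
proof -
  obtain K where K: "0 \<le> K" "\<And>x. hn (T x) \<le> K * hn x" using bounded_op_bound[OF assms(1)] by blast
  obtain L where L: "\<And>x. hn (S x) \<le> L * hn x" using bounded_op_bound[OF assms(2)] by blast
  show ?thesis
  proof (rule bounded_opI[of _ "K * L"])
    show "linear_op (\<lambda>x. T (S x))"
      using assms[THEN bounded_op_linear_op] by (simp add: linear_op_def)
    fix x
    have "hn (T (S x)) \<le> K * hn (S x)" by (rule K)
    also have "\<dots> \<le> K * (L * hn x)" using L K by (simp add: mult_left_mono)
    finally show "hn (T (S x)) \<le> K * L * hn x" by (simp add: mult.assoc)
  qed
qed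

lemma bounded_op_add:
  assumes "bounded_op sc ip T" "bounded_op sc ip S"
  shows "bounded_op sc ip (\<lambda>x. T x + S x)"
proof -
  obtain K where K: "\<And>x. hn (T x) \<le> K * hn x" using bounded_op_bound[OF assms(1)] by blast
  obtain L where L: "\<And>x. hn (S x) \<le> L * hn x" using bounded_op_bound[OF assms(2)] by blast
  show ?thesis
  proof (rule bounded_opI[of _ "K + L"])
    show "linear_op (\<lambda>x. T x + S x)"
      using assms[THEN bounded_op_linear_op] by (simp add: linear_op_def scale_right_distrib algebra_simps)
    fix x
    have "hn (T x + S x) \<le> hn (T x) + hn (S x)" by (rule hn_triangle)
    also have "\<dots> \<le> (K + L) * hn x" using K[of x] L[of x] by (simp add: algebra_simps)
    finally show "hn (T x + S x) \<le> (K + L) * hn x" .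
  qed
qed

lemma bounded_op_scale:
  assumes "bounded_op sc ip T"
  shows "bounded_op sc ip (\<lambda>x. sc c (T x))"
proof -
  obtain K where K: "0 \<le> K" "\<And>x. hn (T x) \<le> K * hn x" using bounded_op_bound[OF assms] by blast
  show ?thesis
  proof (rule bounded_opI[of _ "cmod c * K"])
    show "linear_op (\<lambda>x. sc c (T x))"
      using assms[THEN bounded_op_linear_op] by (simp add: linear_op_def scale_right_distrib mult.commute)
    fix x
    have "hn (sc c (T x)) = cmod c * hn (T x)" by (rule hn_scale)
    also have "\<dots> \<le> cmod c * (K * hn x)" using K by (simp add: mult_left_mono)
    finally show "hn (sc c (T x)) \<le> cmod c * K * hn x" by (simp add: mult.assoc)
  qed
qed

lemma self_adjoint_if_quadratic_form_real:
  assumes T: "linear_op T" and real: "\<And>z. Im (ip z (T z)) = 0"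
  shows "ip (T x) y = ip x (T y)"
proof -
  have "Im (ip x (T y) + ip y (T x)) = 0"
    using real[of "x + y"] real[of x] real[of y] linear_op_add[OF T]
    by (simp add: ip_add_left ip_add_right)
  moreover have "Im (\<i> * ip x (T y) - \<i> * ip y (T x)) = 0"
    using real[of "x + sc \<i> y"] real[of x] real[of y] linear_op_add[OF T] linear_op_scale[OF T]
    by (simp add: ip_add_left ip_add_right ip_scale_left ip_scale_right algebra_simps)
  ultimately have "ip y (T x) = cnj (ip x (T y))"
    by (simp add: complex_eq_iff)
  then show ?thesis by (metis ip_cnj complex_cnj_cnj)
qed

section \<open>Positive block forms\<close>

definition block_form ::
  "(nat \<Rightarrow> nat \<Rightarrow> 'h \<Rightarrow> 'h) \<Rightarrow> nat \<Rightarrow> (nat \<Rightarrow> 'h) \<Rightarrow> (nat \<Rightarrow> 'h) \<Rightarrow> complex" where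
  "block_form F n x y = (\<Sum>i<n. \<Sum>j<n. ip (x i) (F i j (y j)))"

lemma block_form_add_left: "block_form F n (\<lambda>i. x i + y i) z = block_form F n x z + block_form F n y z"
  by (simp add: block_form_def ip_add_left sum.distrib)

lemma block_form_scale_left: "block_form F n (\<lambda>i. sc c (x i)) y = cnj c * block_form F n x y"
  by (simp add: block_form_def ip_scale_left sum_distrib_left)

lemma block_form_add_right:
  "(\<And>i j. linear_op (F i j)) \<Longrightarrow>
    block_form F n x (\<lambda>i. y i + z i) = block_form F n x y + block_form F n x z"
  by (simp add: block_form_def linear_op_add ip_add_right sum.distrib)

lemma block_form_scale_right:
  "(\<And>i j. linear_op (F i j)) \<Longrightarrow> block_form F n x (\<lambda>i. sc c (y i)) = c * block_form F n x y"
  by (simp add: block_form_def linear_op_scale ip_scale_right sum_distrib_left)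

lemma block_form_cauchy_schwarz:
  assumes F: "\<And>i j. linear_op (F i j)"
    and pos: "\<And>x. Im (block_form F n x x) = 0 \<and> 0 \<le> Re (block_form F n x x)"
    and hermitian: "block_form F n u v = block_form F n v u"
  shows "Im (block_form F n u v) = 0 \<and>
    (Re (block_form F n u v))^2 \<le> Re (block_form F n u u) * Re (block_form F n v v)"
proof -
  let ?B = "block_form F n"
  have expand: "?B (\<lambda>i. u i + sc (complex_of_real t) (v i)) (\<lambda>i. u i + sc (complex_of_real t) (v i))
      = ?B u u + complex_of_real (2 * t) * ?B u v + complex_of_real (t^2) * ?B v v" for t
    by (simp add: block_form_add_left block_form_add_right[OF F] block_form_scale_left
        block_form_scale_right[OF F] hermitian algebra_simps power2_eq_square)
  have "Im (?B u u) + 2 * Im (?B u v) + Im (?B v v) = 0"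
    using pos[of "\<lambda>i. u i + sc (complex_of_real 1) (v i)"] unfolding expand by simp
  then have real: "Im (?B u v) = 0" using pos[of u] pos[of v] by simp
  have "0 \<le> Re (?B u u) + 2*t*Re (?B u v) + t^2 * Re (?B v v)" for t
    using pos[of "\<lambda>i. u i + sc (complex_of_real t) (v i)"] real unfolding expand by simp
  then have "(Re (?B u v))^2 \<le> Re (?B u u) * Re (?B v v)"
    by (rule quadratic_nonneg_imp_discriminant) (use pos in auto)
  with real show ?thesis by simp
qed

lemma block_form_iterate_growth:
  assumes F: "\<And>i j. bounded_op sc ip (F i j)"
    and S: "\<And>x. hn (S x) \<le> K * hn x" "0 \<le> K"
  shows "\<exists>C. \<forall>k. Re (block_form F n (\<lambda>i. (S^^k) (x i)) (\<lambda>i. (S^^k) (x i))) \<le> C * (K^2)^k"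
proof -
  have "\<forall>i j. \<exists>L\<ge>0. \<forall>z. hn (F i j z) \<le> L * hn z"
    using bounded_op_bound[OF F] by blast
  then obtain L where L: "\<And>i j. 0 \<le> L i j" "\<And>i j z. hn (F i j z) \<le> L i j * hn z"
    by metis
  define C where "C = (\<Sum>i<n. \<Sum>j<n. hn (x i) * (L i j * hn (x j)))"
  define V where "V k = (\<lambda>i. (S^^k) (x i))" for k
  have hn_V: "hn (V k i) \<le> K^k * hn (x i)" for k i
  proof (induction k)
    case (Suc k)
    have "hn (V (Suc k) i) \<le> K * hn (V k i)" using S(1) by (simp add: V_def)
    also have "\<dots> \<le> K * (K^k * hn (x i))" using Suc S(2) by (simp add: mult_left_mono)
    finally show ?case by (simp add: mult.assoc)
  qed (simp add: V_def)
  have "Re (block_form F n (V k) (V k)) \<le> C * (K^2)^k" for k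
  proof -
    have "Re (block_form F n (V k) (V k)) \<le> (\<Sum>i<n. \<Sum>j<n. cmod (ip (V k i) (F i j (V k j))))"
      unfolding block_form_def
      by (rule order_trans[OF complex_Re_le_cmod order_trans[OF norm_sum sum_mono[OF norm_sum]]])
    also have "\<dots> \<le> (\<Sum>i<n. \<Sum>j<n. (K^2)^k * (hn (x i) * (L i j * hn (x j))))"
    proof (intro sum_mono)
      fix i j
      have "cmod (ip (V k i) (F i j (V k j))) \<le> hn (V k i) * (L i j * hn (V k j))"
        using cauchy_schwarz L(2) hn_nonneg by (meson mult_left_mono order_trans)
      also have "\<dots> \<le> (K^k * hn (x i)) * (L i j * (K^k * hn (x j)))"
        using hn_V hn_nonneg L(1) S(2)
        by (intro mult_mono mult_left_mono) (auto intro: mult_nonneg_nonneg)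
      also have "\<dots> = (K^2)^k * (hn (x i) * (L i j * hn (x j)))"
        by (simp add: power_mult[symmetric] power_mult_distrib[symmetric] mult_2_right power_add ac_simps)
      finally show "cmod (ip (V k i) (F i j (V k j))) \<le> (K^2)^k * (hn (x i) * (L i j * hn (x j)))" .
    qed
    also have "\<dots> = C * (K^2)^k" by (simp add: C_def sum_distrib_left mult.commute)
    finally show ?thesis .
  qed
  then show ?thesis unfolding V_def by blast
qed

text \<open>This replaces the operator inequality \<open>-K \<le> S \<le> K\<close> inside the positive form:
  \<open>q k = B(S^k x, S^k x)\<close> is log-convex by Cauchy-Schwarz, since \<open>S\<close> is symmetric for \<open>B\<close>, and
  grows at most like \<open>K^(2k)\<close>, so \<open>q 1 \<le> K^2 q 0\<close>.\<close>

lemma block_form_commuting_bound: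
  assumes F: "\<And>i j. bounded_op sc ip (F i j)"
    and pos: "\<And>x. Im (block_form F n x x) = 0 \<and> 0 \<le> Re (block_form F n x x)"
    and S: "\<And>x. hn (S x) \<le> K * hn x" "0 < K"
    and S_adjoint: "\<And>x y. ip (S x) y = ip x (S y)"
    and commute: "\<And>i j x. F i j (S x) = S (F i j x)"
  shows "Im (block_form F n x (\<lambda>i. S (x i))) = 0 \<and>
    \<bar>Re (block_form F n x (\<lambda>i. S (x i)))\<bar> \<le> K * Re (block_form F n x x)"
proof -
  let ?B = "block_form F n"
  have F_linear: "\<And>i j. linear_op (F i j)" using F by (rule bounded_op_linear_op)
  have symmetric: "?B (\<lambda>i. S (u i)) w = ?B u (\<lambda>i. S (w i))" for u w
    by (simp add: block_form_def S_adjoint commute)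
  define V where "V k = (\<lambda>i. (S^^k) (x i))" for k
  define q where "q k = Re (?B (V k) (V k))" for k
  have V_Suc: "V (Suc k) = (\<lambda>i. S (V k i))" for k by (simp add: V_def)
  have V_0: "V 0 = x" by (simp add: V_def)
  have q_nonneg: "0 \<le> q k" for k using pos by (simp add: q_def)
  have "?B (V k) (V (Suc (Suc k))) = ?B (V (Suc k)) (V (Suc k))"
    and "?B (V (Suc (Suc k))) (V k) = ?B (V (Suc k)) (V (Suc k))" for k
    by (simp_all only: V_Suc symmetric)
  then have log_convex: "(q (Suc k))^2 \<le> q k * q (Suc (Suc k))" for k
    using block_form_cauchy_schwarz[OF F_linear pos, of "V k" "V (Suc (Suc k))"] by (simp add: q_def)
  have "\<exists>C. \<forall>k. q k \<le> C * (K^2)^k"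
    unfolding q_def V_def by (rule block_form_iterate_growth[OF F S(1) less_imp_le[OF S(2)]])
  then obtain C where "\<And>k. q k \<le> C * (K^2)^k" by blast
  then have q1: "q 1 \<le> K^2 * q 0"
    by (rule log_convex_ratio_le[of q, OF q_nonneg log_convex]) (use S(2) in simp)
  have "?B x (V 1) = ?B (V 1) x" by (simp add: V_def symmetric)
  then have cs: "Im (?B x (V 1)) = 0 \<and> (Re (?B x (V 1)))^2 \<le> q 0 * q 1"
    using block_form_cauchy_schwarz[OF F_linear pos] by (simp add: q_def V_0)
  have "\<bar>Re (?B x (V 1))\<bar>^2 \<le> q 0 * q 1" using cs by simp
  also have "\<dots> \<le> q 0 * (K^2 * q 0)" using q1 q_nonneg[of 0] by (rule mult_left_mono)
  also have "\<dots> = (K * q 0)^2" by (simp add: power2_eq_square)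
  finally have "\<bar>Re (?B x (V 1))\<bar>^2 \<le> (K * q 0)^2" .
  then have "\<bar>Re (?B x (V 1))\<bar> \<le> K * q 0"
    by (rule power2_le_imp_le) (use S(2) q_nonneg in simp)
  then show ?thesis using cs by (simp add: q_def V_def)
qed

end

section \<open>Completely positive maps and instruments\<close>

lemma unital_cstar_algebra_star_one:
  assumes "unital_cstar_algebra sa st nA"
  shows "st 1 = 1"
proof -
  have mult: "\<And>x y. st (x * y) = st y * st x" and involution: "\<And>x. st (st x) = x"
    using assms unfolding unital_cstar_algebra_def by auto
  have "st (st 1) = st (st 1) * st 1" using mult[of 1 "st 1"] by simp
  then show ?thesis using involution[of 1] by simp
qed

context hilbert_structure
begin

lemma completely_positive_iff:
  "completely_positive sa st sc ip \<phi> \<longleftrightarrow>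
     (\<forall>a. bounded_op sc ip (\<phi> a)) \<and>
     (\<forall>a b h. \<phi> (a + b) h = \<phi> a h + \<phi> b h) \<and>
     (\<forall>c a h. \<phi> (sa c a) h = sc c (\<phi> a h)) \<and>
     (\<forall>n Y h. Im (block_form (\<lambda>i j. \<phi> (\<Sum>k<n. st (Y k i) * Y k j)) n h h) = 0 \<and>
              0 \<le> Re (block_form (\<lambda>i j. \<phi> (\<Sum>k<n. st (Y k i) * Y k j)) n h h))"
  by (simp add: completely_positive_def block_form_def Let_def)

lemma completely_positive_bounded_op:
  "completely_positive sa st sc ip \<phi> \<Longrightarrow> bounded_op sc ip (\<phi> a)"
  by (simp add: completely_positive_iff)

lemma completely_positive_add:
  assumes \<phi>: "completely_positive sa st sc ip \<phi>" and \<psi>: "completely_positive sa st sc ip \<psi>"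
  shows "completely_positive sa st sc ip (\<lambda>a h. \<phi> a h + \<psi> a h)"
proof -
  have sum: "block_form (\<lambda>i j h. F i j h + G i j h) n x x = block_form F n x x + block_form G n x x"
    for F G :: "nat \<Rightarrow> nat \<Rightarrow> 'h \<Rightarrow> 'h" and n x
    by (simp add: block_form_def ip_add_right sum.distrib)
  show ?thesis
    using \<phi> \<psi> unfolding completely_positive_iff
    by (simp add: bounded_op_add sum algebra_simps scale_right_distrib)
qed

lemma completely_positive_compose_perturbation:
  assumes \<phi>: "completely_positive sa st sc ip \<phi>"
    and S: "bounded_op sc ip S" "\<And>x. hn (S x) \<le> K * hn x" "0 < K"
    and S_adjoint: "\<And>x y. ip (S x) y = ip x (S y)"
    and commute: "\<And>a x. \<phi> a (S x) = S (\<phi> a x)"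
    and e: "\<bar>e\<bar> * K \<le> 1"
  shows "completely_positive sa st sc ip (\<lambda>a h. \<phi> a (h + sc (complex_of_real e) (S h)))"
proof -
  have bounded: "bounded_op sc ip (\<lambda>h. \<phi> a (h + sc (complex_of_real e) (S h)))" for a
    by (rule bounded_op_comp[OF completely_positive_bounded_op[OF \<phi>]
          bounded_op_add[OF bounded_op_id bounded_op_scale[OF S(1)]]])
  have positive:
    "Im (block_form F n h (\<lambda>j. h j + sc (complex_of_real e) (S (h j)))) = 0 \<and>
     0 \<le> Re (block_form F n h (\<lambda>j. h j + sc (complex_of_real e) (S (h j))))"
    if F_def: "F = (\<lambda>i j. \<phi> (\<Sum>k<n. st (Y k i) * Y k j))" for F n Y and h :: "nat \<Rightarrow> 'h"
  proof -
    have F: "\<And>i j. bounded_op sc ip (F i j)"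
      unfolding F_def by (rule completely_positive_bounded_op[OF \<phi>])
    have pos: "\<And>x. Im (block_form F n x x) = 0 \<and> 0 \<le> Re (block_form F n x x)"
      using \<phi> unfolding F_def completely_positive_iff by blast
    have bound: "Im (block_form F n h (\<lambda>i. S (h i))) = 0 \<and>
        \<bar>Re (block_form F n h (\<lambda>i. S (h i)))\<bar> \<le> K * Re (block_form F n h h)"
      by (rule block_form_commuting_bound[OF F pos S(2,3) S_adjoint]) (simp add: F_def commute)
    have F_linear: "\<And>i j. linear_op (F i j)" using F by (rule bounded_op_linear_op)
    have "block_form F n h (\<lambda>j. h j + sc (complex_of_real e) (S (h j)))
        = block_form F n h h + complex_of_real e * block_form F n h (\<lambda>i. S (h i))"
      by (simp add: block_form_add_right[OF F_linear] block_form_scale_right[OF F_linear])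
    moreover have "\<bar>e * Re (block_form F n h (\<lambda>i. S (h i)))\<bar> \<le> Re (block_form F n h h)"
    proof -
      have "\<bar>e * Re (block_form F n h (\<lambda>i. S (h i)))\<bar> \<le> \<bar>e\<bar> * (K * Re (block_form F n h h))"
        using bound by (simp add: abs_mult mult_left_mono)
      also have "\<dots> \<le> 1 * Re (block_form F n h h)"
        using e pos[of h] by (simp only: mult.assoc[symmetric]) (rule mult_right_mono, auto)
      finally show ?thesis by simp
    qed
    ultimately show ?thesis using bound pos[of h] by simp
  qed
  show ?thesis
    using \<phi> bounded positive unfolding completely_positive_iff
    by (simp add: block_form_def scale_right_distrib)
qed

lemma cp_instrument_sums:
  "cp_instrument M sa st sc ip I \<Longrightarrow> range F \<subseteq> sets M \<Longrightarrow> disjoint_family F \<Longrightarrow>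
    (\<lambda>n. ip g (I (F n) a h)) sums ip g (I (\<Union>n. F n) a h)"
  by (simp add: cp_instrument_def)

lemma cp_instrument_empty:
  assumes I: "cp_instrument M sa st sc ip I"
  shows "I {} a h = 0"
proof (rule eq_if_ip_eq)
  fix g
  have "(\<lambda>n. ip g (I {} a h)) sums ip g (I {} a h)"
    using cp_instrument_sums[OF I, of "\<lambda>n. {}"] by (simp add: disjoint_family_on_def)
  then have "(\<lambda>n. ip g (I {} a h)) \<longlonglongrightarrow> 0" by (intro summable_LIMSEQ_zero sums_summable)
  then show "ip g (I {} a h) = ip g 0" by (simp add: LIMSEQ_const_iff)
qed

lemma cp_instrument_Un:
  assumes I: "cp_instrument M sa st sc ip I" and A: "A \<in> sets M" and B: "B \<in> sets M"
    and disjoint: "A \<inter> B = {}"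
  shows "I (A \<union> B) a h = I A a h + I B a h"
proof (rule eq_if_ip_eq)
  fix g
  have "(\<lambda>n. ip g (I (binaryset A B n) a h)) sums ip g (I (\<Union>n. binaryset A B n) a h)"
    by (rule cp_instrument_sums[OF I])
      (use A B disjoint in \<open>auto simp: range_binaryset_eq disjoint_family_on_def binaryset_def\<close>)
  then have "(\<lambda>n. ip g (I (binaryset A B n) a h)) sums ip g (I (A \<union> B) a h)"
    by (simp add: UN_binaryset_eq)
  moreover have "(\<lambda>n. ip g (I (binaryset A B n) a h)) sums (ip g (I A a h) + ip g (I B a h))"
    by (rule binaryset_sums) (simp add: cp_instrument_empty[OF I])
  ultimately show "ip g (I (A \<union> B) a h) = ip g (I A a h + I B a h)"
    using sums_unique2 by (simp add: ip_add_right)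
qed

lemma cp_instrument_split:
  assumes I: "cp_instrument M sa st sc ip I" and "A \<in> sets M" "E \<in> sets M"
  shows "I A a h = I (A \<inter> E) a h + I (A - E) a h"
proof -
  have "I A a h = I ((A \<inter> E) \<union> (A - E)) a h" by (simp add: Int_Diff_Un)
  also have "\<dots> = I (A \<inter> E) a h + I (A - E) a h"
    by (rule cp_instrument_Un[OF I]) (use assms in auto)
  finally show ?thesis .
qed

lemma cp_instrument_split_sums:
  assumes I: "cp_instrument M sa st sc ip I" and E: "E \<in> sets M"
    and F: "range F \<subseteq> sets M" "disjoint_family F"
  shows "(\<lambda>n. ip g (I (F n \<inter> E) a h1 + I (F n - E) a h2))
    sums ip g (I ((\<Union>n. F n) \<inter> E) a h1 + I ((\<Union>n. F n) - E) a h2)"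
proof -
  have "range (\<lambda>n. F n \<inter> E) \<subseteq> sets M" "disjoint_family (\<lambda>n. F n \<inter> E)"
    and "range (\<lambda>n. F n - E) \<subseteq> sets M" "disjoint_family (\<lambda>n. F n - E)"
    using E F by (auto simp: disjoint_family_on_def)
  from sums_add[OF cp_instrument_sums[OF I this(1,2)] cp_instrument_sums[OF I this(3,4)]]
  show ?thesis by (simp add: ip_add_right)
qed

end

section \<open>Perturbations of an instrument with commutative range\<close>

locale commuting_ucp_instrument = hilbert_structure sc ip
  for sc :: "complex \<Rightarrow> 'h::ab_group_add \<Rightarrow> 'h" and ip :: "'h \<Rightarrow> 'h \<Rightarrow> complex" +
  fixes M :: "'x measure" and sa :: "complex \<Rightarrow> 'a::ring_1 \<Rightarrow> 'a" and st :: "'a \<Rightarrow> 'a"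
    and I :: "'x set \<Rightarrow> 'a \<Rightarrow> 'h \<Rightarrow> 'h"
  assumes ucp: "ucp_instrument M sa st sc ip I"
    and star_one: "st 1 = 1"
    and commuting: "\<forall>A\<in>sets M. \<forall>B\<in>sets M. \<forall>a b. I A a \<circ> I B b = I B b \<circ> I A a"
begin

abbreviation \<mu> :: "'x set \<Rightarrow> 'h \<Rightarrow> 'h" where
  "\<mu> A \<equiv> I A 1"

lemma cp_I: "cp_instrument M sa st sc ip I"
  using ucp by (simp add: ucp_instrument_def)

lemma \<mu>_space: "\<mu> (space M) h = h"
  using ucp by (simp add: ucp_instrument_def)

lemma completely_positive_I: "A \<in> sets M \<Longrightarrow> completely_positive sa st sc ip (I A)"
  using cp_I by (simp add: cp_instrument_def)

lemma bounded_op_I: "A \<in> sets M \<Longrightarrow> bounded_op sc ip (I A a)"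
  by (rule completely_positive_bounded_op[OF completely_positive_I])

lemma I_commute_\<mu>: "A \<in> sets M \<Longrightarrow> B \<in> sets M \<Longrightarrow> I A a (\<mu> B h) = \<mu> B (I A a h)"
  using commuting by (metis comp_apply)

lemma \<mu>_self_adjoint:
  assumes A: "A \<in> sets M"
  shows "ip (\<mu> A x) y = ip x (\<mu> A y)"
proof (rule self_adjoint_if_quadratic_form_real)
  show "linear_op (\<mu> A)" using bounded_op_I[OF A] by (rule bounded_op_linear_op)
  fix z
  have "\<And>n Y h. Im (block_form (\<lambda>i j. I A (\<Sum>k<n. st (Y k i) * Y k j)) n h h) = 0"
    using completely_positive_I[OF A] unfolding completely_positive_iff by blast
  from this[where n=1 and Y="\<lambda>_ _. 1" and h="\<lambda>_. z"] show "Im (ip z (\<mu> A z)) = 0"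
    by (simp add: block_form_def star_one)
qed

lemma \<mu>_complement:
  assumes E: "E \<in> sets M"
  shows "\<mu> (space M - E) h = h - \<mu> E h"
proof -
  have "h = \<mu> E h + \<mu> (space M - E) h"
    using cp_instrument_split[OF cp_I sets.top E, of 1 h] sets.sets_into_space[OF E]
    by (simp add: \<mu>_space Int_absorb1)
  then show ?thesis by (metis add_diff_cancel_left')
qed

definition perturbed :: "'x set \<Rightarrow> real \<Rightarrow> 'x set \<Rightarrow> 'a \<Rightarrow> 'h \<Rightarrow> 'h" where
  "perturbed E e A a h =
     I (A \<inter> E) a (h + sc (complex_of_real e) (\<mu> (space M - E) h))
     + I (A - E) a (h + sc (complex_of_real (- e)) (\<mu> E h))"

lemma perturbed_space:
  assumes E: "E \<in> sets M"
  shows "perturbed E e (space M) 1 h = h"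
proof -
  have E': "space M - E \<in> sets M" using E by auto
  have \<mu>E: "linear_op (\<mu> E)" and \<mu>E': "linear_op (\<mu> (space M - E))"
    using bounded_op_I E E' bounded_op_linear_op by blast+
  have "space M \<inter> E = E" using E sets.sets_into_space by blast
  then have "perturbed E e (space M) 1 h
      = (\<mu> E h + \<mu> (space M - E) h)
        + (sc (complex_of_real e) (\<mu> E (\<mu> (space M - E) h))
           + sc (complex_of_real (- e)) (\<mu> (space M - E) (\<mu> E h)))"
    unfolding perturbed_def
    by (simp add: linear_op_add[OF \<mu>E] linear_op_add[OF \<mu>E'] linear_op_scale[OF \<mu>E]
        linear_op_scale[OF \<mu>E'] linear_op_diff[OF \<mu>E'] add_ac)
  also have "\<dots> = h"
    using I_commute_\<mu>[OF E' E, of 1 h]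
    by (simp add: \<mu>_complement[OF E] scale_left_distrib[symmetric])
  finally show ?thesis .
qed

lemma perturbed_ucp:
  assumes E: "E \<in> sets M" and K: "0 < K"
    and bound: "\<And>h. hn (\<mu> E h) \<le> K * hn h" "\<And>h. hn (\<mu> (space M - E) h) \<le> K * hn h"
    and e: "\<bar>e\<bar> * K \<le> 1"
  shows "ucp_instrument M sa st sc ip (perturbed E e)"
proof -
  have E': "space M - E \<in> sets M" using E by auto
  have "completely_positive sa st sc ip (perturbed E e A)" if A: "A \<in> sets M" for A
  proof -
    have AE: "A \<inter> E \<in> sets M" "A - E \<in> sets M" using A E by auto
    have e': "\<bar>- e\<bar> * K \<le> 1" using e by simp
    show ?thesis
      unfolding perturbed_def
      by (rule completely_positive_add completely_positive_compose_perturbation[OF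
            completely_positive_I[OF AE(1)] bounded_op_I[OF E'] bound(2) K \<mu>_self_adjoint[OF E']
            I_commute_\<mu>[OF AE(1) E'] e]
          completely_positive_compose_perturbation[OF
            completely_positive_I[OF AE(2)] bounded_op_I[OF E] bound(1) K \<mu>_self_adjoint[OF E]
            I_commute_\<mu>[OF AE(2) E] e'])+
  qed
  moreover have "(\<lambda>n. ip g (perturbed E e (F n) a h)) sums ip g (perturbed E e (\<Union>n. F n) a h)"
    if "range F \<subseteq> sets M" "disjoint_family F" for g a h F
    unfolding perturbed_def by (rule cp_instrument_split_sums[OF cp_I E that])
  moreover have "perturbed E e (space M) 1 h = h" for h
    by (rule perturbed_space[OF E])
  ultimately show ?thesis by (simp add: ucp_instrument_def cp_instrument_def)
qed

lemma ex_perturbed_ucp: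
  assumes E: "E \<in> sets M"
  shows "\<exists>e>0. ucp_instrument M sa st sc ip (perturbed E e) \<and>
    ucp_instrument M sa st sc ip (perturbed E (- e))"
proof -
  have E': "space M - E \<in> sets M" using E by auto
  obtain K1 K2 where "0 \<le> K1" "\<And>h. hn (\<mu> E h) \<le> K1 * hn h"
    and "0 \<le> K2" "\<And>h. hn (\<mu> (space M - E) h) \<le> K2 * hn h"
    using bounded_op_bound[OF bounded_op_I[OF E]] bounded_op_bound[OF bounded_op_I[OF E']] by blast
  then have "\<And>h. hn (\<mu> E h) \<le> (K1 + K2 + 1) * hn h"
    and "\<And>h. hn (\<mu> (space M - E) h) \<le> (K1 + K2 + 1) * hn h"
    by (smt (verit) hn_nonneg mult_right_mono)+
  moreover have "0 < K1 + K2 + 1" "\<bar>1 / (K1 + K2 + 1)\<bar> * (K1 + K2 + 1) \<le> 1"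
    using \<open>0 \<le> K1\<close> \<open>0 \<le> K2\<close> by simp_all
  ultimately show ?thesis
    using perturbed_ucp[OF E] by (intro exI[of _ "1 / (K1 + K2 + 1)"]) auto
qed

lemma perturbed_midpoint:
  assumes "E \<in> sets M" "A \<in> sets M"
  shows "I A a h = sc (complex_of_real (1/2)) (perturbed E e A a h)
    + sc (complex_of_real (1 - 1/2)) (perturbed E (- e) A a h)"
proof -
  have "A \<inter> E \<in> sets M" "A - E \<in> sets M" using assms by auto
  then have "linear_op (I (A \<inter> E) a)" "linear_op (I (A - E) a)"
    using bounded_op_I bounded_op_linear_op by blast+
  then show ?thesis
    unfolding cp_instrument_split[OF cp_I assms(2,1), of a h] perturbed_def
    by (intro eq_if_ip_eq)
      (simp add: linear_op_add linear_op_scale linear_op_diff ip_add_right ip_diff_right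
        ip_scale_right algebra_simps)
qed

lemma perturbed_at_event:
  assumes E: "E \<in> sets M"
  shows "perturbed E e E 1 h = \<mu> E h + sc (complex_of_real e) (\<mu> E (\<mu> (space M - E) h))"
proof -
  have "linear_op (\<mu> E)" using bounded_op_I[OF E] by (rule bounded_op_linear_op)
  then show ?thesis
    by (simp add: perturbed_def cp_instrument_empty[OF cp_I] linear_op_add linear_op_scale)
qed

lemma \<mu>_projection_if_orthogonal_complement:
  assumes E: "E \<in> sets M" and orthogonal: "\<And>h. \<mu> E (\<mu> (space M - E) h) = 0"
  shows "projection sc ip (\<mu> E)"
proof -
  have "linear_op (\<mu> E)" using bounded_op_I[OF E] by (rule bounded_op_linear_op)
  then have "\<mu> E (\<mu> E h) = \<mu> E h" for h
    using orthogonal[of h] by (simp add: \<mu>_complement[OF E] linear_op_diff)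
  then show ?thesis
    unfolding projection_def using bounded_op_I[OF E] \<mu>_self_adjoint[OF E] by (auto simp: fun_eq_iff)
qed

end

theorem theorem4p1:
  fixes M :: "'x measure"
    and sa :: "complex \<Rightarrow> 'a::ring_1 \<Rightarrow> 'a" and st :: "'a \<Rightarrow> 'a" and nA :: "'a \<Rightarrow> real"
    and sc :: "complex \<Rightarrow> 'h::ab_group_add \<Rightarrow> 'h" and ip :: "'h \<Rightarrow> 'h \<Rightarrow> complex"
    and I :: "'x set \<Rightarrow> 'a \<Rightarrow> 'h \<Rightarrow> 'h"
  assumes "unital_cstar_algebra sa st nA"
    and "hilbert_space sc ip"
    and "extreme_ucp_instrument M sa st sc ip I"
    and "\<forall>A\<in>sets M. \<forall>B\<in>sets M. \<forall>a b. I A a \<circ> I B b = I B b \<circ> I A a"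
  shows "\<forall>A\<in>sets M. projection sc ip (I A 1)"
proof
  fix E assume E: "E \<in> sets M"
  interpret commuting_ucp_instrument sc ip M sa st I
    using assms unital_cstar_algebra_star_one
    by unfold_locales (auto simp: extreme_ucp_instrument_def)
  obtain e where e: "e > 0" "ucp_instrument M sa st sc ip (perturbed E e)"
      "ucp_instrument M sa st sc ip (perturbed E (- e))"
    using ex_perturbed_ucp[OF E] by blast
  note extreme = assms(3)[unfolded extreme_ucp_instrument_def, THEN conjunct2, rule_format]
  have "perturbed E e E 1 h = \<mu> E h" for h
    using extreme[OF e(2,3) _ _ perturbed_midpoint[OF E] E, of 1 h] by simp
  then have "\<mu> E (\<mu> (space M - E) h) = 0" for h
    using perturbed_at_event[OF E, of e h] e(1) by simp
  then show "projection sc ip (\<mu> E)"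
    by (rule \<mu>_projection_if_orthogonal_complement[OF E])
qed

end
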